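(* Let $f:A\to B$ be a geometrically closed homomorphism between $\mathscr L$-structures such that the trivial structure $\mathbf 1$ does not embed into $B$. Then $f$ is an immersion. In particular, if $T$ is a strict theory, every geometrically closed homomorphism between models of $T_u$ is an immersion.
   Context: The trivial structure $\mathbf 1$ is the one-element $\mathscr L$-structure in which every relation symbol is interpreted as the full relation. A homomorphism preserves atomic sentences with parameters. A homomorphism $f:A\to B$ is geometrically closed if every sentence $\forall\bar y\,(\bigwedge\Phi(\bar a,\bar y)\to\psi(\bar a,\bar y))$ ($\Phi\cup\{\psi\}$ finite sets of atomic formulas, parameters $\bar a$ from $A$) true in $A$ is true in $B$ of $f\bar a$. $f$ is an immersion if for every positive existential (prenex existential, negation-free) sentence $\phi(\bar a)$ with parameters from $A$, $B\models\phi(f\bar a)$ implies $A\models\phi(\bar a)$. $T_u$ is the set of consequences of $T$ of the form $\forall\bar y\,\neg\bigwedge\Phi$, $\Phi$ a finite set of atomic formulas. $T$ is strict if $\mathbf 1$ embeds in no model of $T$ (equivalently $\mathbf 1\not\models T_u$). *)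

theory Defs
  imports Main
begin

text \<open>A signature has relation symbols of type 'r with arities arR and function
symbols (constants = 0-ary) of type 'f with arities arF. An L-structure has universe a (nonempty) type 'a.\<close>

record ('r, 'f, 'a) struct =
  rel  :: "'r \<Rightarrow> 'a list \<Rightarrow> bool"
  func :: "'f \<Rightarrow> 'a list \<Rightarrow> 'a"

datatype 'f trm = Var nat | App 'f "'f trm list"

datatype ('r, 'f) atom = Eq "'f trm" "'f trm" | Rel 'r "'f trm list"

fun eval :: "('r, 'f, 'a) struct \<Rightarrow> (nat \<Rightarrow> 'a) \<Rightarrow> 'f trm \<Rightarrow> 'a" where
  "eval M s (Var n) = s n"
| "eval M s (App g ts) = func M g (map (eval M s) ts)"

fun wf_trm :: "('f \<Rightarrow> nat) \<Rightarrow> 'f trm \<Rightarrow> bool" where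
  "wf_trm arF (Var n) = True"
| "wf_trm arF (App g ts) = (length ts = arF g \<and> (\<forall>t\<in>set ts. wf_trm arF t))"

fun wf_atom :: "('r \<Rightarrow> nat) \<Rightarrow> ('f \<Rightarrow> nat) \<Rightarrow> ('r, 'f) atom \<Rightarrow> bool" where
  "wf_atom arR arF (Eq t u) = (wf_trm arF t \<and> wf_trm arF u)"
| "wf_atom arR arF (Rel R ts) = (length ts = arR R \<and> (\<forall>t\<in>set ts. wf_trm arF t))"

fun holds_atom :: "('r, 'f, 'a) struct \<Rightarrow> (nat \<Rightarrow> 'a) \<Rightarrow> ('r, 'f) atom \<Rightarrow> bool" where
  "holds_atom M s (Eq t u) = (eval M s t = eval M s u)"
| "holds_atom M s (Rel R ts) = rel M R (map (eval M s) ts)"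

datatype ('r, 'f) pqf = PAtom "('r, 'f) atom" | PAnd "('r, 'f) pqf" "('r, 'f) pqf"
  | POr "('r, 'f) pqf" "('r, 'f) pqf"

fun wf_pqf :: "('r \<Rightarrow> nat) \<Rightarrow> ('f \<Rightarrow> nat) \<Rightarrow> ('r, 'f) pqf \<Rightarrow> bool" where
  "wf_pqf arR arF (PAtom a) = wf_atom arR arF a"
| "wf_pqf arR arF (PAnd p q) = (wf_pqf arR arF p \<and> wf_pqf arR arF q)"
| "wf_pqf arR arF (POr p q) = (wf_pqf arR arF p \<and> wf_pqf arR arF q)"

fun holds_pqf :: "('r, 'f, 'a) struct \<Rightarrow> (nat \<Rightarrow> 'a) \<Rightarrow> ('r, 'f) pqf \<Rightarrow> bool" where
  "holds_pqf M s (PAtom a) = holds_atom M s a"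
| "holds_pqf M s (PAnd p q) = (holds_pqf M s p \<and> holds_pqf M s q)"
| "holds_pqf M s (POr p q) = (holds_pqf M s p \<or> holds_pqf M s q)"

text \<open>Parameters from the domain are given by an assignment s; the variables in the
finite set ys are the quantified ones (s' agrees with s off ys).\<close>

definition homomorphism ::
  "('r \<Rightarrow> nat) \<Rightarrow> ('f \<Rightarrow> nat) \<Rightarrow> ('r, 'f, 'a) struct \<Rightarrow> ('r, 'f, 'b) struct \<Rightarrow> ('a \<Rightarrow> 'b) \<Rightarrow> bool" where
  "homomorphism arR arF A B f \<longleftrightarrow>
     (\<forall>s a. wf_atom arR arF a \<longrightarrow> holds_atom A s a \<longrightarrow> holds_atom B (f \<circ> s) a)"

definition embedding ::
  "('r \<Rightarrow> nat) \<Rightarrow> ('f \<Rightarrow> nat) \<Rightarrow> ('r, 'f, 'a) struct \<Rightarrow> ('r, 'f, 'b) struct \<Rightarrow> ('a \<Rightarrow> 'b) \<Rightarrow> bool" where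
  "embedding arR arF A B f \<longleftrightarrow> inj f \<and>
     (\<forall>s a. wf_atom arR arF a \<longrightarrow> (holds_atom A s a \<longleftrightarrow> holds_atom B (f \<circ> s) a))"

definition geometrically_closed ::
  "('r \<Rightarrow> nat) \<Rightarrow> ('f \<Rightarrow> nat) \<Rightarrow> ('r, 'f, 'a) struct \<Rightarrow> ('r, 'f, 'b) struct \<Rightarrow> ('a \<Rightarrow> 'b) \<Rightarrow> bool" where
  "geometrically_closed arR arF A B f \<longleftrightarrow>
     (\<forall>s (ys :: nat set) (\<Phi> :: ('r, 'f) atom set) \<psi>.
        finite ys \<longrightarrow> finite \<Phi> \<longrightarrow> (\<forall>\<phi>\<in>\<Phi>. wf_atom arR arF \<phi>) \<longrightarrow> wf_atom arR arF \<psi> \<longrightarrow>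
        (\<forall>s'. (\<forall>v. v \<notin> ys \<longrightarrow> s' v = s v) \<longrightarrow> (\<forall>\<phi>\<in>\<Phi>. holds_atom A s' \<phi>) \<longrightarrow> holds_atom A s' \<psi>) \<longrightarrow>
        (\<forall>t. (\<forall>v. v \<notin> ys \<longrightarrow> t v = f (s v)) \<longrightarrow> (\<forall>\<phi>\<in>\<Phi>. holds_atom B t \<phi>) \<longrightarrow> holds_atom B t \<psi>))"

definition immersion ::
  "('r \<Rightarrow> nat) \<Rightarrow> ('f \<Rightarrow> nat) \<Rightarrow> ('r, 'f, 'a) struct \<Rightarrow> ('r, 'f, 'b) struct \<Rightarrow> ('a \<Rightarrow> 'b) \<Rightarrow> bool" where
  "immersion arR arF A B f \<longleftrightarrow>
     (\<forall>s (ys :: nat set) (\<phi> :: ('r, 'f) pqf).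
        finite ys \<longrightarrow> wf_pqf arR arF \<phi> \<longrightarrow>
        (\<exists>t. (\<forall>v. v \<notin> ys \<longrightarrow> t v = f (s v)) \<and> holds_pqf B t \<phi>) \<longrightarrow>
        (\<exists>s'. (\<forall>v. v \<notin> ys \<longrightarrow> s' v = s v) \<and> holds_pqf A s' \<phi>))"

definition trivial_struct :: "('r, 'f, unit) struct" where
  "trivial_struct = \<lparr>rel = (\<lambda>_ _. True), func = (\<lambda>_ _. ())\<rparr>"

definition trivial_embeds ::
  "('r \<Rightarrow> nat) \<Rightarrow> ('f \<Rightarrow> nat) \<Rightarrow> ('r, 'f, 'b) struct \<Rightarrow> bool" where
  "trivial_embeds arR arF B \<longleftrightarrow> (\<exists>g. embedding arR arF trivial_struct B g)"

text \<open>A sentence \<forall>y. \<not>\<And>\<Phi> (no parameters) is represented by the finite set \<Phi> of atoms;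
all its variables are universally quantified.\<close>

definition sat_neg :: "('r, 'f, 'a) struct \<Rightarrow> ('r, 'f) atom set \<Rightarrow> bool" where
  "sat_neg M \<Phi> \<longleftrightarrow> (\<forall>s. \<not> (\<forall>\<phi>\<in>\<Phi>. holds_atom M s \<phi>))"

definition neg_sentence :: "('r \<Rightarrow> nat) \<Rightarrow> ('f \<Rightarrow> nat) \<Rightarrow> ('r, 'f) atom set \<Rightarrow> bool" where
  "neg_sentence arR arF \<Phi> \<longleftrightarrow> finite \<Phi> \<and> (\<forall>\<phi>\<in>\<Phi>. wf_atom arR arF \<phi>)"

definition models_neg :: "('r, 'f, 'a) struct \<Rightarrow> ('r, 'f) atom set set \<Rightarrow> bool" where
  "models_neg M U \<longleftrightarrow> (\<forall>\<Phi>\<in>U. sat_neg M \<Phi>)"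

end

theory Submission
  imports Defs
begin

text \<open>Suppose a positive existential sentence \<open>\<exists>y. \<phi>\<close> with parameters from A holds in B at the
  image of its parameters but fails in A. Bringing \<open>\<phi>\<close> into disjunctive normal form, some
  conjunction \<open>\<Phi>\<close> of atoms is solvable in B but not in A. Then every sentence
  \<open>\<forall>y z. \<And>\<Phi> \<longrightarrow> \<psi>\<close> holds vacuously in A, so by geometric closure in B; taking for \<open>\<psi>\<close> atoms in
  fresh variables z shows that B satisfies \<open>z\<^sub>1 = z\<^sub>2\<close> and every relation
  \<open>R z\<^sub>1 \<dots> z\<^sub>n\<close> for all values of z, i.e. the trivial structure embeds into B. Models of
  \<open>T\<^sub>u\<close> for a strict T admit no such embedding, since an embedding carries a counterexample
  in \<open>\<one>\<close> to a universal negative sentence of \<open>T\<^sub>u\<close> into B.\<close>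

fun vars_trm :: "'f trm \<Rightarrow> nat set" where
  "vars_trm (Var n) = {n}"
| "vars_trm (App g ts) = (\<Union>t\<in>set ts. vars_trm t)"

fun vars_atom :: "('r, 'f) atom \<Rightarrow> nat set" where
  "vars_atom (Eq t u) = vars_trm t \<union> vars_trm u"
| "vars_atom (Rel R ts) = (\<Union>t\<in>set ts. vars_trm t)"

lemma finite_vars_trm: "finite (vars_trm t)"
  by (induction t) auto

lemma finite_vars_atom: "finite (vars_atom a)"
  by (cases a) (auto simp: finite_vars_trm)

lemma eval_cong: "(\<And>v. v \<in> vars_trm t \<Longrightarrow> s v = s' v) \<Longrightarrow> eval M s t = eval M s' t"
proof (induction t)
  case (App g ts)
  then have "map (eval M s) ts = map (eval M s') ts" by auto
  then show ?case by (simp del: map_eq_conv)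
qed simp

lemma holds_atom_cong:
  "(\<And>v. v \<in> vars_atom a \<Longrightarrow> s v = s' v) \<Longrightarrow> holds_atom M s a = holds_atom M s' a"
proof (cases a)
  case (Rel R ts)
  assume "\<And>v. v \<in> vars_atom a \<Longrightarrow> s v = s' v"
  then have "map (eval M s) ts = map (eval M s') ts"
    using Rel by (auto intro: eval_cong)
  then show ?thesis using Rel by (simp del: map_eq_conv)
next
  case (Eq t u)
  assume "\<And>v. v \<in> vars_atom a \<Longrightarrow> s v = s' v"
  then have "eval M s t = eval M s' t" "eval M s u = eval M s' u"
    using Eq by (auto intro: eval_cong)
  then show ?thesis using Eq by simp
qed

fun dnf :: "('r, 'f) pqf \<Rightarrow> ('r, 'f) atom list list" where
  "dnf (PAtom a) = [[a]]"
| "dnf (PAnd p q) = [c @ d. c \<leftarrow> dnf p, d \<leftarrow> dnf q]"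
| "dnf (POr p q) = dnf p @ dnf q"

lemma holds_pqf_iff_dnf:
  "holds_pqf M s \<phi> \<longleftrightarrow> (\<exists>c\<in>set (dnf \<phi>). \<forall>a\<in>set c. holds_atom M s a)"
proof (induction \<phi>)
  case (PAnd p q)
  show ?case
  proof
    assume "holds_pqf M s (PAnd p q)"
    then obtain c d where "c \<in> set (dnf p)" "\<forall>a\<in>set c. holds_atom M s a"
      and "d \<in> set (dnf q)" "\<forall>a\<in>set d. holds_atom M s a"
      using PAnd by auto
    then show "\<exists>e\<in>set (dnf (PAnd p q)). \<forall>a\<in>set e. holds_atom M s a"
      by (intro bexI[of _ "c @ d"]) auto
  qed (use PAnd in auto)
qed auto

lemma wf_atom_dnf:
  "wf_pqf arR arF \<phi> \<Longrightarrow> c \<in> set (dnf \<phi>) \<Longrightarrow> a \<in> set c \<Longrightarrow> wf_atom arR arF a"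
  by (induction \<phi> arbitrary: c) auto

lemma geometrically_closed_forces_fresh_atoms:
  fixes A :: "('r, 'f, 'a) struct" and B :: "('r, 'f, 'b) struct"
  assumes gc: "geometrically_closed arR arF A B f"
    and fin: "finite ys" "finite \<Phi>" and wf: "\<forall>\<phi>\<in>\<Phi>. wf_atom arR arF \<phi>" "wf_atom arR arF \<psi>"
    and unsolvable_A: "\<nexists>s'. (\<forall>v. v \<notin> ys \<longrightarrow> s' v = s v) \<and> (\<forall>\<phi>\<in>\<Phi>. holds_atom A s' \<phi>)"
    and t_params: "\<forall>v. v \<notin> ys \<longrightarrow> t v = f (s v)" and t_solves: "\<forall>\<phi>\<in>\<Phi>. holds_atom B t \<phi>"
    and fresh: "finite Z" "Z \<inter> (\<Union>\<phi>\<in>\<Phi>. vars_atom \<phi>) = {}"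
    and t'_t: "\<forall>v. v \<notin> Z \<longrightarrow> t' v = t v"
  shows "holds_atom B t' \<psi>"
proof -
  have vacuous_A: "\<forall>s'. (\<forall>v. v \<notin> ys \<union> Z \<longrightarrow> s' v = s v) \<longrightarrow>
      (\<forall>\<phi>\<in>\<Phi>. holds_atom A s' \<phi>) \<longrightarrow> holds_atom A s' \<psi>"
  proof (intro allI impI)
    fix s' assume s'_s: "\<forall>v. v \<notin> ys \<union> Z \<longrightarrow> s' v = s v" and "\<forall>\<phi>\<in>\<Phi>. holds_atom A s' \<phi>"
    define s'' where "s'' = (\<lambda>v. if v \<in> Z then s v else s' v)"
    have "holds_atom A s'' \<phi>" if "\<phi> \<in> \<Phi>" for \<phi>
    proof -
      have "holds_atom A s'' \<phi> = holds_atom A s' \<phi>"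
        using fresh(2) that by (intro holds_atom_cong) (auto simp: s''_def)
      then show ?thesis using \<open>\<forall>\<phi>\<in>\<Phi>. holds_atom A s' \<phi>\<close> that by blast
    qed
    moreover have "\<forall>v. v \<notin> ys \<longrightarrow> s'' v = s v"
      using s'_s by (auto simp: s''_def)
    ultimately show "holds_atom A s' \<psi>" using unsolvable_A by blast
  qed
  have t'_solves: "\<forall>\<phi>\<in>\<Phi>. holds_atom B t' \<phi>"
  proof
    fix \<phi> assume "\<phi> \<in> \<Phi>"
    have "holds_atom B t' \<phi> = holds_atom B t \<phi>"
      using fresh(2) t'_t \<open>\<phi> \<in> \<Phi>\<close> by (intro holds_atom_cong) auto
    then show "holds_atom B t' \<phi>" using t_solves \<open>\<phi> \<in> \<Phi>\<close> by blast
  qed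
  have t'_params: "\<forall>v. v \<notin> ys \<union> Z \<longrightarrow> t' v = f (s v)"
    using t'_t t_params by auto
  show ?thesis
    by (rule gc[unfolded geometrically_closed_def, rule_format, where ys = "ys \<union> Z" and s = s])
      (use vacuous_A t'_solves t'_params fin wf fresh(1) in auto)
qed

lemma trivial_embeds_if_singleton_full:
  fixes B :: "('r, 'f, 'b) struct"
  assumes singleton: "\<And>b1 b2 :: 'b. b1 = b2"
    and full: "\<And>R (bs :: 'b list). length bs = arR R \<Longrightarrow> rel B R bs"
  shows "trivial_embeds arR arF B"
proof -
  have "embedding arR arF trivial_struct B (\<lambda>_. undefined)"
    unfolding embedding_def
  proof (intro conjI allI impI)
    fix s and a :: "('r, 'f) atom"
    assume "wf_atom arR arF a"
    then show "holds_atom trivial_struct s a = holds_atom B ((\<lambda>_. undefined) \<circ> s) a"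
      by (cases a) (simp_all add: trivial_struct_def full, metis singleton)
  qed (simp add: inj_def)
  then show ?thesis unfolding trivial_embeds_def by blast
qed

lemma immersion_if_geometrically_closed:
  fixes A :: "('r, 'f, 'a) struct" and B :: "('r, 'f, 'b) struct"
  assumes gc: "geometrically_closed arR arF A B f" and nontrivial: "\<not> trivial_embeds arR arF B"
  shows "immersion arR arF A B f"
  unfolding immersion_def
proof (intro allI impI)
  fix s and ys :: "nat set" and \<phi> :: "('r, 'f) pqf"
  assume "finite ys" and "wf_pqf arR arF \<phi>"
    and "\<exists>t. (\<forall>v. v \<notin> ys \<longrightarrow> t v = f (s v)) \<and> holds_pqf B t \<phi>"
  then obtain t where t_params: "\<forall>v. v \<notin> ys \<longrightarrow> t v = f (s v)" and "holds_pqf B t \<phi>"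
    by blast
  then obtain c where c: "c \<in> set (dnf \<phi>)" and t_solves: "\<forall>a\<in>set c. holds_atom B t a"
    using holds_pqf_iff_dnf by metis
  show "\<exists>s'. (\<forall>v. v \<notin> ys \<longrightarrow> s' v = s v) \<and> holds_pqf A s' \<phi>"
  proof (rule ccontr)
    assume "\<not> ?thesis"
    then have unsolvable_A: "\<nexists>s'. (\<forall>v. v \<notin> ys \<longrightarrow> s' v = s v) \<and> (\<forall>a\<in>set c. holds_atom A s' a)"
      using c holds_pqf_iff_dnf by metis
    have forced: "holds_atom B t' \<psi>"
      if "wf_atom arR arF \<psi>" "finite Z" "Z \<inter> (\<Union>a\<in>set c. vars_atom a) = {}"
        "\<forall>v. v \<notin> Z \<longrightarrow> t' v = t v" for \<psi> Z t'
      by (rule geometrically_closed_forces_fresh_atoms[OF gc \<open>finite ys\<close> _ _ _ unsolvable_A t_params t_solves])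
        (use that wf_atom_dnf[OF \<open>wf_pqf arR arF \<phi>\<close> c] in auto)
    obtain N where N: "\<forall>a\<in>set c. \<forall>v\<in>vars_atom a. v < N"
      using finite_nat_set_iff_bounded[of "\<Union>a\<in>set c. vars_atom a"] by (auto simp: finite_vars_atom)
    have singleton: "b1 = b2" for b1 b2 :: 'b
    proof -
      have "holds_atom B (t(N := b1, Suc N := b2)) (Eq (Var N) (Var (Suc N)))"
        by (rule forced[where Z = "{N, Suc N}"]) (use N in \<open>auto dest: Suc_lessD\<close>)
      then show ?thesis by simp
    qed
    have full: "rel B R bs" if "length bs = arR R" for R and bs :: "'b list"
    proof -
      define t' where "t' = (\<lambda>v. if v \<in> {N..<N + length bs} then bs ! (v - N) else t v)"
      have "holds_atom B t' (Rel R (map Var [N..<N + length bs]))"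
        by (rule forced[where Z = "{N..<N + length bs}"])
          (use that N in \<open>fastforce simp: t'_def\<close>)+
      moreover have "map (eval B t') (map Var [N..<N + length bs]) = bs"
        by (rule nth_equalityI) (auto simp: t'_def)
      ultimately show ?thesis by simp
    qed
    show False
      using trivial_embeds_if_singleton_full[OF singleton full] nontrivial by contradiction
  qed
qed

lemma not_trivial_embeds_if_models_neg:
  fixes B :: "('r, 'f, 'b) struct"
  assumes "\<forall>\<Phi>\<in>U. neg_sentence arR arF \<Phi>"
    and "\<not> models_neg (trivial_struct :: ('r, 'f, unit) struct) U" and "models_neg B U"
  shows "\<not> trivial_embeds arR arF B"
proof
  assume "trivial_embeds arR arF B"
  then obtain g where g: "embedding arR arF trivial_struct B g"
    unfolding trivial_embeds_def by blast
  obtain \<Phi> s where "\<Phi> \<in> U" and "\<forall>\<phi>\<in>\<Phi>. holds_atom (trivial_struct :: ('r, 'f, unit) struct) s \<phi>"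
    using assms(2) unfolding models_neg_def sat_neg_def by blast
  then have "\<forall>\<phi>\<in>\<Phi>. holds_atom B (g \<circ> s) \<phi>"
    using g assms(1) unfolding embedding_def neg_sentence_def by blast
  then show False
    using \<open>\<Phi> \<in> U\<close> assms(3) unfolding models_neg_def sat_neg_def by blast
qed

theorem lemma4p9:
  fixes arR :: "'r \<Rightarrow> nat" and arF :: "'f \<Rightarrow> nat"
  shows "(\<forall>(A :: ('r, 'f, 'a) struct) (B :: ('r, 'f, 'b) struct) f.
            homomorphism arR arF A B f \<longrightarrow> geometrically_closed arR arF A B f \<longrightarrow>
            \<not> trivial_embeds arR arF B \<longrightarrow> immersion arR arF A B f)
       \<and> (\<forall>(U :: ('r, 'f) atom set set) (A :: ('r, 'f, 'a) struct) (B :: ('r, 'f, 'b) struct) f.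
            (\<forall>\<Phi>\<in>U. neg_sentence arR arF \<Phi>) \<longrightarrow>
            \<not> models_neg (trivial_struct :: ('r, 'f, unit) struct) U \<longrightarrow>
            models_neg A U \<longrightarrow> models_neg B U \<longrightarrow>
            homomorphism arR arF A B f \<longrightarrow> geometrically_closed arR arF A B f \<longrightarrow>
            immersion arR arF A B f)"
  using immersion_if_geometrically_closed not_trivial_embeds_if_models_neg by blast

end
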